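(* Let $p\geq 2$ be an even integer and let $U_p=\bigcup_{n\in 2\mathbb Z_+}\mathbb Z_p^n$. Let $\boldsymbol a,\boldsymbol b\in U_p$ be equivalent (in the sense defined in the context). Then $\varepsilon_p(\boldsymbol a)=\varepsilon_p(\boldsymbol b)$.
   Context: $\mathbb Z_+$ denotes the positive integers and $\mathbb Z_p=\mathbb Z/p\mathbb Z$. Two elements of $U_p$ are called equivalent if they are related by a finite sequence of the following transformations of $(a_1,\ldots,a_n)\in\mathbb Z_p^n$ ($n$ even): (Op1) $(a_1,\ldots,a_n)\to(a_2,\ldots,a_n,a_1)$; (Op2) $(a_1,\ldots,a_n)\to(a, a_2+(-1)^2(a_1-a),\ldots,a_i+(-1)^i(a_1-a),\ldots,a_n+(-1)^n(a_1-a))$ for any $a\in\mathbb Z_p$; (Op3) $(a_1,\ldots,a_n)\to(a, a_1-a_2+a,\ldots,a_1-a_i+a,\ldots,a_1-a_n+a)$ for any $a\in\mathbb Z_p$; (Op4) $(a_1,\ldots,a_n)\to(a_1,-a_1+a_2+a_3,a_3,\ldots,a_n)$ when $n>3$. For $p$ even, parity of elements of $\mathbb Z_p$ is well defined, and $\varepsilon_p:U_p\to\mathbb Z\cup\{\infty\}$ is defined by $\varepsilon_p(a_1,\ldots,a_n)=0$ if $a_1+a_2\equiv a_2+a_3\equiv\cdots\equiv a_n+a_1\equiv 0\pmod 2$, $=1$ if $a_1+a_2\equiv\cdots\equiv a_n+a_1\equiv 1\pmod 2$, and $=\infty$ otherwise. *)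

theory Defs
  imports Main "HOL-Library.Extended_Nat"
begin

text \<open>Elements of Z_p are represented by their canonical representatives in {0..<p};
  a tuple (a_1,...,a_n) is the list [a_1,...,a_n] (0-indexed: a_i = xs ! (i-1)).\<close>

definition U :: "int \<Rightarrow> int list set" where
  "U p = {xs. 0 < length xs \<and> even (length xs) \<and> set xs \<subseteq> {0..<p}}"

definition op1 :: "int list \<Rightarrow> int list" where
  "op1 xs = rotate1 xs"

definition op2 :: "int \<Rightarrow> int \<Rightarrow> int list \<Rightarrow> int list" where
  "op2 p a xs = map (\<lambda>j. if j = 0 then a mod p
       else (xs ! j + (-1) ^ (j + 1) * (xs ! 0 - a)) mod p) [0..<length xs]"

definition op3 :: "int \<Rightarrow> int \<Rightarrow> int list \<Rightarrow> int list" where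
  "op3 p a xs = map (\<lambda>j. if j = 0 then a mod p
       else (xs ! 0 - xs ! j + a) mod p) [0..<length xs]"

definition op4 :: "int \<Rightarrow> int list \<Rightarrow> int list" where
  "op4 p xs = xs[1 := (- xs ! 0 + xs ! 1 + xs ! 2) mod p]"

definition step :: "int \<Rightarrow> int list \<Rightarrow> int list \<Rightarrow> bool" where
  "step p xs ys \<longleftrightarrow> xs \<in> U p \<and>
     (ys = op1 xs
      \<or> (\<exists>a\<in>{0..<p}. ys = op2 p a xs)
      \<or> (\<exists>a\<in>{0..<p}. ys = op3 p a xs)
      \<or> (length xs > 3 \<and> ys = op4 p xs))"

definition equiv_U :: "int \<Rightarrow> int list \<Rightarrow> int list \<Rightarrow> bool" where
  "equiv_U p xs ys \<longleftrightarrow> (symclp (step p))\<^sup>*\<^sup>* xs ys"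

definition eps :: "int list \<Rightarrow> enat" where
  "eps xs =
    (if \<forall>i<length xs. even (xs ! i + xs ! ((i + 1) mod length xs)) then 0
     else if \<forall>i<length xs. odd (xs ! i + xs ! ((i + 1) mod length xs)) then 1
     else \<infinity>)"

end

theory Submission
  imports Defs "HOL-Combinatorics.Transposition"
begin

text \<open>\<open>\<epsilon>\<^sub>p\<close> only sees the parities of the cyclic sums \<open>a\<^sub>i + a\<^sub>i\<^sub>+\<^sub>1\<close>, and in fact
  only which parities occur among them. Since \<open>p\<close> is even, reduction mod \<open>p\<close> preserves parity.
  Op1 rotates the sequence of sum parities; Op2 and Op3 change the parity of every entry
  by the same amount, leaving all sums' parities fixed; Op4 exchanges the parities of the
  first two sums. None of these changes the set of occurring parities.\<close>

definition adj_sum_even :: "int list \<Rightarrow> nat \<Rightarrow> bool" where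
  "adj_sum_even xs i \<longleftrightarrow> even (xs ! i + xs ! (Suc i mod length xs))"

abbreviation adj_sum_parities :: "int list \<Rightarrow> bool set" where
  "adj_sum_parities xs \<equiv> adj_sum_even xs ` {..<length xs}"

lemma eps_eq_adj_sum_parities:
  "eps xs = (if False \<notin> adj_sum_parities xs then 0
             else if True \<notin> adj_sum_parities xs then 1 else \<infinity>)"
  unfolding eps_def adj_sum_even_def by auto

lemma eps_eqI: "adj_sum_parities xs = adj_sum_parities ys \<Longrightarrow> eps xs = eps ys"
  by (simp add: eps_eq_adj_sum_parities)

lemma eps_eq_if_uniform_parity_shift:
  assumes "length ys = length xs" and "\<And>j. j < length xs \<Longrightarrow> even (ys ! j) \<longleftrightarrow> even (xs ! j + c)"
  shows "eps ys = eps xs"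
proof (rule eps_eqI)
  have "adj_sum_even ys i = adj_sum_even xs i" if "i < length xs" for i
  proof -
    have "Suc i mod length xs < length xs"
      using that by (intro mod_less_divisor) linarith
    then have "even (ys ! i + ys ! (Suc i mod length xs))
        \<longleftrightarrow> even (xs ! i + xs ! (Suc i mod length xs) + 2 * c)"
      using assms(2) that by auto
    then show ?thesis
      by (simp add: adj_sum_even_def assms(1))
  qed
  then show "adj_sum_parities ys = adj_sum_parities xs"
    using assms(1) by simp
qed

lemma image_Suc_mod_lessThan: "0 < n \<Longrightarrow> (\<lambda>i. Suc i mod n) ` {..<n} = {..<n}"
proof (intro equalityI subsetI)
  fix n j :: nat assume "0 < n" "j \<in> {..<n}"
  then show "j \<in> (\<lambda>i. Suc i mod n) ` {..<n}"
  proof (cases j)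
    case 0
    with \<open>0 < n\<close> show ?thesis
      by (auto intro!: image_eqI[where x = "n - 1"])
  next
    case (Suc k)
    with \<open>j \<in> {..<n}\<close> show ?thesis
      by (auto intro!: image_eqI[where x = k])
  qed
qed auto

lemma eps_op1: "xs \<noteq> [] \<Longrightarrow> eps (op1 xs) = eps xs"
proof (rule eps_eqI)
  let ?n = "length xs"
  assume "xs \<noteq> []"
  then have "adj_sum_even (op1 xs) i = adj_sum_even xs (Suc i mod ?n)" if "i < ?n" for i
    using that by (simp add: adj_sum_even_def op1_def nth_rotate1 mod_Suc_eq)
  then have "adj_sum_parities (op1 xs) = adj_sum_even xs ` (\<lambda>i. Suc i mod ?n) ` {..<?n}"
    by (simp add: op1_def image_image)
  also have "\<dots> = adj_sum_parities xs"
    using \<open>xs \<noteq> []\<close> by (simp add: image_Suc_mod_lessThan)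
  finally show "adj_sum_parities (op1 xs) = adj_sum_parities xs" .
qed

lemma eps_op2: "even p \<Longrightarrow> eps (op2 p a xs) = eps xs"
proof (rule eps_eq_if_uniform_parity_shift[where c = "a - xs ! 0"])
  fix j assume "even p" "j < length xs"
  moreover have "even (xs ! j + (-1) ^ (j + 1) * (xs ! 0 - a)) \<longleftrightarrow> even (xs ! j + (a - xs ! 0))"
    by auto
  ultimately show "even (op2 p a xs ! j) \<longleftrightarrow> even (xs ! j + (a - xs ! 0))"
    by (auto simp: op2_def dvd_mod_iff)
qed (simp add: op2_def)

lemma eps_op3: "even p \<Longrightarrow> eps (op3 p a xs) = eps xs"
proof (rule eps_eq_if_uniform_parity_shift[where c = "xs ! 0 + a"])
  fix j assume "even p" "j < length xs"
  then show "even (op3 p a xs ! j) \<longleftrightarrow> even (xs ! j + (xs ! 0 + a))"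
    by (auto simp: op3_def dvd_mod_iff)
qed (simp add: op3_def)

lemma eps_op4:
  assumes "length xs > 3" and "even p"
  shows "eps (op4 p xs) = eps xs"
proof (rule eps_eqI)
  let ?n = "length xs" and ?ys = "op4 p xs"
  have length_ys: "length ?ys = ?n"
    by (simp add: op4_def)
  have ys_nth: "?ys ! k = xs ! k" if "k \<noteq> 1" for k
    using that by (simp add: op4_def)
  have ys_1_parity: "even (?ys ! 1) \<longleftrightarrow> even (xs ! 0 + xs ! 1 + xs ! 2)"
    using assms by (auto simp: op4_def dvd_mod_iff)
  have "adj_sum_even ?ys k = adj_sum_even xs (transpose 0 1 k)" if "k < ?n" for k
  proof -
    consider "k = 0" | "k = 1" | "k \<ge> 2" "k + 1 < ?n" | "k + 1 = ?n"
      using \<open>k < ?n\<close> by linarith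
    then show ?thesis
    proof cases
      case 1
      have "even (xs ! 0 + ?ys ! 1) \<longleftrightarrow> even (xs ! 1 + xs ! 2)"
        using ys_1_parity by auto
      with 1 assms(1) show ?thesis
        by (simp add: adj_sum_even_def length_ys ys_nth numeral_2_eq_2)
    next
      case 2
      have "even (?ys ! 1 + xs ! 2) \<longleftrightarrow> even (xs ! 0 + xs ! 1)"
        using ys_1_parity by auto
      with 2 assms(1) show ?thesis
        by (simp add: adj_sum_even_def length_ys ys_nth numeral_2_eq_2)
    next
      case 3
      then show ?thesis
        by (simp add: adj_sum_even_def length_ys ys_nth)
    next
      case 4
      with assms(1) show ?thesis
        by (simp add: adj_sum_even_def length_ys ys_nth)
    qed
  qed
  then have "adj_sum_parities ?ys = adj_sum_even xs ` transpose 0 1 ` {..<?n}"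
    by (simp add: length_ys image_image)
  also have "\<dots> = adj_sum_parities xs"
    using assms(1) by (subst transpose_image_eq) auto
  finally show "adj_sum_parities ?ys = adj_sum_parities xs" .
qed

lemma eps_step: "even p \<Longrightarrow> step p xs ys \<Longrightarrow> eps xs = eps ys"
  unfolding step_def U_def
  by (elim conjE disjE bexE) (simp_all add: eps_op1 eps_op2 eps_op3 eps_op4)

lemma equivclp_invariant:
  assumes "equivclp r x y" and "\<And>u v. r u v \<Longrightarrow> f u = f v"
  shows "f x = f y"
  using assms(1) by (induction rule: equivclp_induct) (auto dest: assms(2))

theorem mainTheorem2:
  fixes p :: int and a b :: "int list"
  assumes "p \<ge> 2" and "even p"
    and "a \<in> U p" and "b \<in> U p"
    and "equiv_U p a b"
  shows "eps a = eps b"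
  using assms(5) eps_step[OF assms(2)]
  unfolding equiv_U_def equivclp_def[symmetric]
  by (rule equivclp_invariant)

end
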